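(* Let $n\geq 2$ and let $C$ be a $2$-null completely regular code in $G_n$ with covering radius $\rho\geq 2$ and parameter matrix $[a_0,b_0|c_1,a_1,b_1|\ldots|c_\rho,a_\rho]$, such that $\mathbf{0}\in C$. Then every word of type $1100$ that lies in $C_2$ is adjacent to exactly $c_2-2$ words of weight three that lie in $C_1$.
   Context: $G_n$ is the graph with vertex set $\mathbb{Z}^n$ in which $x,y$ are adjacent iff $\sum_{i=1}^n|x_i-y_i|=1$; $d$ is its graph distance, and the weight of $x$ is $d(x,\mathbf{0})=\sum_i|x_i|$, where $\mathbf{0}$ is the all-zero word. For a vertex set $C$ (a code), $\rho=\max_v d(v,C)$ is its covering radius and $C_i=\{v: d(v,C)=i\}$, so $C_0=C$. $C$ is a completely regular code (CRC) if for all $i,j\in\{0,\ldots,\rho\}$ there is a number $\alpha_{ij}$ such that every vertex of $C_i$ has exactly $\alpha_{ij}$ neighbours in $C_j$, and $\alpha_{ij}=0$ whenever $|i-j|>1$. Writing $a_i=\alpha_{ii}$, $b_i=\alpha_{i,i+1}$, $c_i=\alpha_{i,i-1}$, the parameter matrix is written $[a_0,b_0|c_1,a_1,b_1|\ldots|c_\rho,a_\rho]$. A CRC is $r$-null if $a_0=\cdots=a_{r-1}=0$. The type of a word of weight at most four is the sequence of its four largest absolute values of entries, in nonincreasing order (padded by zeros); e.g. type $1100$ means exactly two entries equal $\pm1$ and all others $0$. *)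

theory Defs
  imports Main
begin

text \<open>Vertices of G_n are words x : 'n \<Rightarrow> int, where 'n is a finite index type
  with n = CARD('n) coordinates (so the vertex set is Z^n).\<close>

definition gadj :: "('n::finite \<Rightarrow> int) \<Rightarrow> ('n \<Rightarrow> int) \<Rightarrow> bool" where
  "gadj x y \<longleftrightarrow> (\<Sum>i\<in>UNIV. \<bar>x i - y i\<bar>) = 1"

definition gdist :: "('n::finite \<Rightarrow> int) \<Rightarrow> ('n \<Rightarrow> int) \<Rightarrow> nat" where
  "gdist x y = (LEAST k. (gadj ^^ k) x y)"

definition weight :: "('n::finite \<Rightarrow> int) \<Rightarrow> nat" where
  "weight x = gdist x (\<lambda>_. 0)"

definition dcode :: "('n::finite \<Rightarrow> int) set \<Rightarrow> ('n \<Rightarrow> int) \<Rightarrow> nat" where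
  "dcode C v = Inf (gdist v ` C)"

definition layer :: "('n::finite \<Rightarrow> int) set \<Rightarrow> nat \<Rightarrow> ('n \<Rightarrow> int) set" where
  "layer C i = {v. dcode C v = i}"

definition covering_radius_is :: "('n::finite \<Rightarrow> int) set \<Rightarrow> nat \<Rightarrow> bool" where
  "covering_radius_is C \<rho> \<longleftrightarrow> (\<forall>v. dcode C v \<le> \<rho>) \<and> (\<exists>v. dcode C v = \<rho>)"

definition nbrs_in :: "('n::finite \<Rightarrow> int) \<Rightarrow> ('n \<Rightarrow> int) set \<Rightarrow> nat" where
  "nbrs_in v S = card {w. gadj v w \<and> w \<in> S}"

text \<open>C is a completely regular code with covering radius \<rho> and numbers \<alpha> i j
  (so a_i = \<alpha> i i, b_i = \<alpha> i (i+1), c_i = \<alpha> i (i-1)).\<close>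
definition CRC_with :: "('n::finite \<Rightarrow> int) set \<Rightarrow> nat \<Rightarrow> (nat \<Rightarrow> nat \<Rightarrow> nat) \<Rightarrow> bool" where
  "CRC_with C \<rho> \<alpha> \<longleftrightarrow> C \<noteq> {} \<and> covering_radius_is C \<rho> \<and>
     (\<forall>i\<le>\<rho>. \<forall>j\<le>\<rho>. (\<forall>v\<in>layer C i. nbrs_in v (layer C j) = \<alpha> i j) \<and>
        (1 < \<bar>int i - int j\<bar> \<longrightarrow> \<alpha> i j = 0))"

definition r_null :: "nat \<Rightarrow> (nat \<Rightarrow> nat \<Rightarrow> nat) \<Rightarrow> bool" where
  "r_null r \<alpha> \<longleftrightarrow> (\<forall>i<r. \<alpha> i i = 0)"

definition type1100 :: "('n::finite \<Rightarrow> int) \<Rightarrow> bool" where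
  "type1100 x \<longleftrightarrow> card {i. \<bar>x i\<bar> = 1} = 2 \<and> (\<forall>i. \<bar>x i\<bar> = 1 \<or> x i = 0)"

end

theory Submission
  imports Defs
begin

text \<open>The graph distance of \<open>G_n\<close> is the \<open>\<ell>\<^sub>1\<close> distance, and adjacent words differ
  by \<open>\<plusminus>1\<close> in exactly one coordinate. So a neighbour of a word \<open>x\<close> of weight two has
  weight one or three, and those of weight one arise by zeroing one of the two nonzero entries
  of \<open>x\<close>. If \<open>x \<in> C\<^sub>2\<close>, both of them lie in \<open>C\<^sub>1\<close>: they are at distance one from
  \<open>\<zero> \<in> C\<close>, and not in \<open>C\<close> since \<open>C\<^sub>2\<close> has no neighbours in \<open>C\<^sub>0\<close>. The other
  \<open>c\<^sub>2 - 2\<close> neighbours of \<open>x\<close> in \<open>C\<^sub>1\<close> therefore have weight three.\<close>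

definition l1_dist :: "('n::finite \<Rightarrow> int) \<Rightarrow> ('n \<Rightarrow> int) \<Rightarrow> int" where
  "l1_dist x y = (\<Sum>i\<in>UNIV. \<bar>x i - y i\<bar>)"

lemma l1_dist_nonneg: "0 \<le> l1_dist x y"
  unfolding l1_dist_def by (simp add: sum_nonneg)

lemma l1_dist_triangle: "l1_dist x z \<le> l1_dist x y + l1_dist y z"
  unfolding l1_dist_def sum.distrib[symmetric] by (rule sum_mono) linarith

lemma l1_dist_eq_0_iff: "l1_dist x y = 0 \<longleftrightarrow> x = y"
  unfolding l1_dist_def by (subst sum_nonneg_eq_0_iff) (auto simp: fun_eq_iff)

lemma l1_dist_fun_upd: "l1_dist (x(k := v)) y = l1_dist x y - \<bar>x k - y k\<bar> + \<bar>v - y k\<bar>"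
proof -
  have "(\<Sum>i\<in>UNIV - {k}. \<bar>(x(k := v)) i - y i\<bar>) = (\<Sum>i\<in>UNIV - {k}. \<bar>x i - y i\<bar>)"
    by (rule sum.cong) auto
  then show ?thesis
    unfolding l1_dist_def by (simp add: sum.remove[of UNIV k])
qed

lemma gadj_iff_unit_step: "gadj x w \<longleftrightarrow> (\<exists>k s. \<bar>s\<bar> = 1 \<and> w = x(k := x k + s))"
proof
  assume adj: "gadj x w"
  then have "x \<noteq> w"
    by (auto simp: gadj_def)
  then obtain k where "x k \<noteq> w k"
    by auto
  have split: "1 = \<bar>x k - w k\<bar> + (\<Sum>i\<in>UNIV - {k}. \<bar>x i - w i\<bar>)"
    using adj unfolding gadj_def by (simp add: sum.remove[of UNIV k])
  moreover have "0 \<le> (\<Sum>i\<in>UNIV - {k}. \<bar>x i - w i\<bar>)"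
    by (simp add: sum_nonneg)
  moreover have "1 \<le> \<bar>x k - w k\<bar>"
    using \<open>x k \<noteq> w k\<close> by arith
  ultimately have "\<bar>x k - w k\<bar> = 1" and rest: "(\<Sum>i\<in>UNIV - {k}. \<bar>x i - w i\<bar>) = 0"
    by linarith+
  then have step: "\<bar>w k - x k\<bar> = 1"
    by (simp add: abs_minus_commute)
  from rest have "\<forall>i\<in>UNIV - {k}. w i = x i"
    by (subst (asm) sum_nonneg_eq_0_iff) auto
  then have "w = x(k := x k + (w k - x k))"
    by (auto simp: fun_eq_iff)
  with step show "\<exists>k s. \<bar>s\<bar> = 1 \<and> w = x(k := x k + s)"
    by blast
next
  assume "\<exists>k s. \<bar>s\<bar> = 1 \<and> w = x(k := x k + s)"
  then obtain k s where "\<bar>s\<bar> = 1" "w = x(k := x k + s)"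
    by blast
  then show "gadj x w"
    using l1_dist_fun_upd[of x k "x k + s" x] l1_dist_eq_0_iff[of x x]
    by (simp add: gadj_def l1_dist_def abs_minus_commute)
qed

lemma relpowp_gadj_imp_l1_dist_le: "(gadj ^^ m) x y \<Longrightarrow> l1_dist x y \<le> int m"
proof (induction m arbitrary: y)
  case 0
  then show ?case by (simp add: l1_dist_def)
next
  case (Suc m)
  from Suc.prems obtain z where "(gadj ^^ m) x z" "gadj z y"
    by (rule relpowp_Suc_E)
  have "l1_dist z y = 1"
    using \<open>gadj z y\<close> by (simp add: gadj_def l1_dist_def)
  with Suc.IH[OF \<open>(gadj ^^ m) x z\<close>] show ?case
    using l1_dist_triangle[of x y z] by simp
qed

lemma l1_dist_imp_relpowp_gadj: "l1_dist x y = int m \<Longrightarrow> (gadj ^^ m) x y"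
proof (induction m arbitrary: x)
  case 0
  then show ?case by (simp add: l1_dist_eq_0_iff)
next
  case (Suc m)
  then obtain k where k: "x k \<noteq> y k"
    by (metis l1_dist_eq_0_iff of_nat_neq_0 fun_eq_iff)
  define x' where "x' = x(k := x k + sgn (y k - x k))"
  have "\<bar>sgn (y k - x k)\<bar> = 1"
    using k by simp
  then have "gadj x x'"
    unfolding gadj_iff_unit_step x'_def by blast
  moreover have "l1_dist x' y = int m"
    using Suc.prems k by (auto simp: x'_def l1_dist_fun_upd abs_if sgn_if)
  ultimately show ?case
    using Suc.IH by (meson relpowp_Suc_I2)
qed

lemma gdist_eq_l1_dist: "gdist x y = nat (l1_dist x y)"
  unfolding gdist_def
proof (rule Least_equality)
  show "(gadj ^^ nat (l1_dist x y)) x y"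
    using l1_dist_imp_relpowp_gadj[of x y "nat (l1_dist x y)"] l1_dist_nonneg[of x y] by simp
next
  show "nat (l1_dist x y) \<le> m" if "(gadj ^^ m) x y" for m
    using relpowp_gadj_imp_l1_dist_le[OF that] by simp
qed

lemma weight_eq_l1_dist: "int (weight x) = l1_dist x (\<lambda>_. 0)"
  by (simp add: weight_def gdist_eq_l1_dist l1_dist_nonneg)

lemma weight_eq_card_support:
  assumes "\<And>i. \<bar>x i\<bar> \<le> 1"
  shows "weight x = card {i. x i \<noteq> 0}"
proof -
  have "\<bar>x i\<bar> = 1" if "x i \<noteq> 0" for i
    using assms[of i] that by arith
  then have "(\<Sum>i\<in>UNIV. \<bar>x i\<bar>) = (\<Sum>i\<in>{i. x i \<noteq> 0}. 1)"
    by (intro sum.mono_neutral_cong_right) (auto simp: abs_if)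
  then show ?thesis
    using weight_eq_l1_dist[of x] by (simp add: l1_dist_def)
qed

lemma finite_neighbours: "finite {w. gadj x w}"
proof (rule finite_subset)
  show "{w. gadj x w} \<subseteq> (\<lambda>(k, s). x(k := x k + s)) ` (UNIV \<times> {-1, 1})"
    by (auto simp: gadj_iff_unit_step abs_eq_iff)
qed simp

lemma weight_fun_upd: "int (weight (x(k := v))) = int (weight x) - \<bar>x k\<bar> + \<bar>v\<bar>"
  by (simp add: weight_eq_l1_dist l1_dist_fun_upd)

lemma abs_add_unit_cases:
  fixes a s :: int
  assumes "\<bar>s\<bar> = 1"
  shows "\<bar>a + s\<bar> = \<bar>a\<bar> + 1 \<or> (a \<noteq> 0 \<and> s = - sgn a \<and> \<bar>a + s\<bar> = \<bar>a\<bar> - 1)"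
  using assms by (auto simp: abs_if sgn_if split: if_splits)

lemma weight_neighbour:
  assumes "gadj x w"
  shows "weight w = weight x + 1 \<or> weight w + 1 = weight x"
proof -
  obtain k s where "\<bar>s\<bar> = 1" "w = x(k := x k + s)"
    using assms gadj_iff_unit_step by blast
  then have "int (weight w) = int (weight x) + 1 \<or> int (weight w) = int (weight x) - 1"
    using abs_add_unit_cases[of s "x k"] by (auto simp: weight_fun_upd)
  then show ?thesis
    by auto
qed

lemma lighter_neighbours:
  "{w. gadj x w \<and> weight w < weight x} = (\<lambda>k. x(k := x k - sgn (x k))) ` {k. x k \<noteq> 0}"
proof (intro equalityI subsetI)
  fix w assume "w \<in> {w. gadj x w \<and> weight w < weight x}"
  then obtain k s where s: "\<bar>s\<bar> = 1" "w = x(k := x k + s)" and "weight w < weight x"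
    using gadj_iff_unit_step by blast
  then have "\<bar>x k + s\<bar> < \<bar>x k\<bar>"
    using weight_fun_upd[of x k "x k + s"] by simp
  then have "x k \<noteq> 0" "s = - sgn (x k)"
    using abs_add_unit_cases[OF s(1), of "x k"] by auto
  with s(2) show "w \<in> (\<lambda>k. x(k := x k - sgn (x k))) ` {k. x k \<noteq> 0}"
    by auto
next
  fix w assume "w \<in> (\<lambda>k. x(k := x k - sgn (x k))) ` {k. x k \<noteq> 0}"
  then obtain k where k: "x k \<noteq> 0" and w: "w = x(k := x k + - sgn (x k))"
    by auto
  have unit: "\<bar>- sgn (x k)\<bar> = 1"
    using k by simp
  then have "gadj x w"
    unfolding gadj_iff_unit_step w by blast
  moreover have "\<bar>x k + - sgn (x k)\<bar> = \<bar>x k\<bar> - 1"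
    using abs_add_unit_cases[OF unit, of "x k"] k by (auto simp: sgn_if)
  then have "weight w < weight x"
    using weight_fun_upd[of x k "x k + - sgn (x k)"] w by simp
  ultimately show "w \<in> {w. gadj x w \<and> weight w < weight x}"
    by simp
qed

lemma card_lighter_neighbours:
  "card {w. gadj x w \<and> weight w < weight x} = card {k. x k \<noteq> 0}"
proof -
  have "inj_on (\<lambda>k. x(k := x k - sgn (x k))) {k. x k \<noteq> 0}"
  proof (rule inj_onI, rule ccontr)
    fix k k' assume "k \<in> {k. x k \<noteq> 0}" "k \<noteq> k'"
      and "x(k := x k - sgn (x k)) = x(k' := x k' - sgn (x k'))"
    then have "x k - sgn (x k) = x k"
      by (metis fun_upd_same fun_upd_other)
    with \<open>k \<in> {k. x k \<noteq> 0}\<close> show False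
      by (simp add: sgn_0_0)
  qed
  then show ?thesis
    by (simp add: lighter_neighbours card_image)
qed

lemma dcode_le_weight: "(\<lambda>_. 0) \<in> C \<Longrightarrow> dcode C w \<le> weight w"
  unfolding dcode_def weight_def by (rule cInf_lower) auto

lemma CRC_card_neighbours_in_layer:
  assumes "CRC_with C \<rho> \<alpha>" "i \<le> \<rho>" "j \<le> \<rho>" "v \<in> layer C i"
  shows "card {w. gadj v w \<and> w \<in> layer C j} = \<alpha> i j"
  using assms unfolding CRC_with_def nbrs_in_def by blast

lemma CRC_no_neighbour_in_far_layer:
  assumes "CRC_with C \<rho> \<alpha>" "i \<le> \<rho>" "j \<le> \<rho>" "1 < \<bar>int i - int j\<bar>"
    and "v \<in> layer C i" "gadj v w"
  shows "w \<notin> layer C j"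
proof
  assume "w \<in> layer C j"
  have "finite {w. gadj v w \<and> w \<in> layer C j}"
    using finite_neighbours by (rule rev_finite_subset) blast
  moreover have "card {w. gadj v w \<and> w \<in> layer C j} = 0"
    using CRC_card_neighbours_in_layer[OF assms(1-3,5)] assms(1-4)
    unfolding CRC_with_def by simp
  ultimately show False
    using \<open>w \<in> layer C j\<close> \<open>gadj v w\<close> by auto
qed

lemma card_neighbours_split_by_weight:
  "card {w. gadj x w \<and> w \<in> S} =
     card {w. gadj x w \<and> weight w = weight x + 1 \<and> w \<in> S} +
     card {w. gadj x w \<and> weight w < weight x \<and> w \<in> S}"
proof -
  have "{w. gadj x w \<and> w \<in> S} =
      {w. gadj x w \<and> weight w = weight x + 1 \<and> w \<in> S} \<union>
      {w. gadj x w \<and> weight w < weight x \<and> w \<in> S}"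
    using weight_neighbour[of x] by force
  moreover have "finite {w. gadj x w \<and> P w}" for P
    using finite_neighbours by (rule rev_finite_subset) blast
  ultimately show ?thesis
    by (simp add: card_Un_disjoint disjoint_iff)
qed

lemma type1100_support:
  assumes "type1100 x"
  shows "card {i. x i \<noteq> 0} = 2" and "weight x = 2"
proof -
  have "{i. x i \<noteq> 0} = {i. \<bar>x i\<bar> = 1}"
    using assms unfolding type1100_def by force
  then show support: "card {i. x i \<noteq> 0} = 2"
    using assms by (simp add: type1100_def)
  have "\<bar>x i\<bar> \<le> 1" for i
    using assms unfolding type1100_def by (metis abs_zero order.refl zero_le_one)
  then show "weight x = 2"
    using weight_eq_card_support[of x] support by simp
qed

lemma lighter_neighbours_in_layer1:
  assumes "CRC_with C \<rho> \<alpha>" "2 \<le> \<rho>" "(\<lambda>_. 0) \<in> C"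
    and "x \<in> layer C 2" "weight x = 2"
  shows "{w. gadj x w \<and> weight w < weight x} \<subseteq> layer C 1"
proof
  fix w assume w: "w \<in> {w. gadj x w \<and> weight w < weight x}"
  then have "dcode C w \<le> 1"
    using dcode_le_weight[OF assms(3), of w] assms(5) by simp
  moreover have "w \<notin> layer C 0"
    using CRC_no_neighbour_in_far_layer[OF assms(1), of 2 0 x w] assms(2,4) w by simp
  ultimately show "w \<in> layer C 1"
    by (simp add: layer_def)
qed

theorem mainTheorem1:
  fixes C :: "('n::finite \<Rightarrow> int) set" and \<rho> :: nat and \<alpha> :: "nat \<Rightarrow> nat \<Rightarrow> nat"
  assumes "card (UNIV :: 'n set) \<ge> 2"
    and "CRC_with C \<rho> \<alpha>"
    and "r_null 2 \<alpha>"
    and "\<rho> \<ge> 2"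
    and "(\<lambda>_. 0) \<in> C"
  shows "\<forall>x. type1100 x \<and> x \<in> layer C 2 \<longrightarrow>
           int (card {w. gadj x w \<and> weight w = 3 \<and> w \<in> layer C 1}) = int (\<alpha> 2 1) - 2"
proof (intro allI impI)
  fix x :: "'n \<Rightarrow> int"
  assume "type1100 x \<and> x \<in> layer C 2"
  then have x: "type1100 x" "x \<in> layer C 2"
    by auto
  have "{w. gadj x w \<and> weight w < weight x \<and> w \<in> layer C 1} = {w. gadj x w \<and> weight w < weight x}"
    using lighter_neighbours_in_layer1[OF assms(2,4,5) x(2) type1100_support(2)[OF x(1)]] by blast
  then have "card {w. gadj x w \<and> weight w < weight x \<and> w \<in> layer C 1} = 2"
    using card_lighter_neighbours[of x] type1100_support(1)[OF x(1)] by simp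
  moreover have "card {w. gadj x w \<and> w \<in> layer C 1} = \<alpha> 2 1"
    using CRC_card_neighbours_in_layer[OF assms(2)] assms(4) x(2) by simp
  ultimately show "int (card {w. gadj x w \<and> weight w = 3 \<and> w \<in> layer C 1}) = int (\<alpha> 2 1) - 2"
    using card_neighbours_split_by_weight[of x "layer C 1"] type1100_support(2)[OF x(1)] by simp
qed

end
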